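(* Let $\mathfrak B\in K_{\overline\alpha}$. Then there is a substructure $\mathfrak Z\subseteq\mathfrak B$ with $\delta(\mathfrak Z)=0$ such that every substructure $\mathfrak C\subseteq\mathfrak B$ with $\delta(\mathfrak C)=0$ satisfies $\mathfrak C\subseteq\mathfrak Z$.
   Context: Fix a finite relational language $L$ in which every relation symbol has arity at least $2$. $K_L$ is the class of all finite $L$-structures (including the empty one) in which every relation symbol is interpreted symmetrically and irreflexively. Fix $\overline\alpha:L\to(0,1]$, writing $\overline\alpha_E=\overline\alpha(E)$, such that it is not the case that all symbols of $L$ are binary and $\overline\alpha_E=1$ for all $E$. For $\mathfrak A\in K_L$ let $N_E(\mathfrak A)$ be the number of subsets of $A$ on which $E$ holds and $\delta(\mathfrak A)=|A|-\sum_{E}\overline\alpha_E N_E(\mathfrak A)$ (so $\delta(\emptyset)=0$). $K_{\overline\alpha}=\{\mathfrak A\in K_L:\delta(\mathfrak A')\ge0\text{ for all substructures }\mathfrak A'\subseteq\mathfrak A\}$. *)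

theory Defs
  imports Complex_Main
begin

text \<open>An L-structure with symmetric, irreflexive relations is given by a
universe A and, for every symbol E, the set of subsets of A (each of size ar E)
on which E holds.\<close>

definition is_KL_structure ::
  "'l set \<Rightarrow> ('l \<Rightarrow> nat) \<Rightarrow> 'a set \<Rightarrow> ('l \<Rightarrow> 'a set set) \<Rightarrow> bool" where
  "is_KL_structure L ar A R \<longleftrightarrow>
     finite A \<and> (\<forall>E\<in>L. R E \<subseteq> {S. S \<subseteq> A \<and> card S = ar E})"

definition induced_rel :: "('l \<Rightarrow> 'a set set) \<Rightarrow> 'a set \<Rightarrow> ('l \<Rightarrow> 'a set set)" where
  "induced_rel R X = (\<lambda>E. {S \<in> R E. S \<subseteq> X})"

definition delta ::
  "'l set \<Rightarrow> ('l \<Rightarrow> real) \<Rightarrow> 'a set \<Rightarrow> ('l \<Rightarrow> 'a set set) \<Rightarrow> real" where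
  "delta L alpha A R = real (card A) - (\<Sum>E\<in>L. alpha E * real (card (R E)))"

definition in_K_alpha ::
  "'l set \<Rightarrow> ('l \<Rightarrow> nat) \<Rightarrow> ('l \<Rightarrow> real) \<Rightarrow> 'a set \<Rightarrow> ('l \<Rightarrow> 'a set set) \<Rightarrow> bool" where
  "in_K_alpha L ar alpha A R \<longleftrightarrow>
     is_KL_structure L ar A R \<and>
     (\<forall>X\<subseteq>A. delta L alpha X (induced_rel R X) \<ge> 0)"

end

theory Submission
  imports Defs
begin

text \<open>Proof idea: for finite substructures, \<delta> is submodular,
\<open>\<delta>(X \<union> Y) + \<delta>(X \<inter> Y) \<le> \<delta>(X) + \<delta>(Y)\<close>, because the vertex count is
modular while every relation holding on X or on Y also holds on \<open>X \<union> Y\<close>.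
In \<open>K\<^sub>\<alpha>\<close> all four values are nonnegative, so the substructures of \<delta>-value 0
are closed under union. They include the empty one, hence their (finite)
union is again of \<delta>-value 0 and is the largest such substructure.\<close>

lemma card_induced_rel_Un_Int_le:
  assumes "finite (R E)"
  shows "card (induced_rel R X E) + card (induced_rel R Y E)
         \<le> card (induced_rel R (X \<union> Y) E) + card (induced_rel R (X \<inter> Y) E)"
proof -
  let ?a = "induced_rel R X E" and ?b = "induced_rel R Y E"
  have fin: "finite ?a" "finite ?b" using assms by (auto simp: induced_rel_def)
  have "card ?a + card ?b = card (?a \<union> ?b) + card (?a \<inter> ?b)"
    using card_Un_Int[OF fin] .
  moreover have "?a \<inter> ?b = induced_rel R (X \<inter> Y) E"
    by (auto simp: induced_rel_def)
  moreover have "card (?a \<union> ?b) \<le> card (induced_rel R (X \<union> Y) E)"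
    using assms by (intro card_mono) (auto simp: induced_rel_def)
  ultimately show ?thesis by simp
qed

lemma delta_Un_Int_le:
  assumes "finite X" "finite Y" and "\<forall>E\<in>L. 0 \<le> alpha E \<and> finite (R E)"
  shows "delta L alpha (X \<union> Y) (induced_rel R (X \<union> Y)) + delta L alpha (X \<inter> Y) (induced_rel R (X \<inter> Y))
         \<le> delta L alpha X (induced_rel R X) + delta L alpha Y (induced_rel R Y)"
proof -
  let ?N = "\<lambda>Z E. real (card (induced_rel R Z E))"
  have vertices: "card (X \<union> Y) + card (X \<inter> Y) = card X + card Y"
    using card_Un_Int[OF assms(1,2)] by simp
  have "alpha E * ?N X E + alpha E * ?N Y E \<le> alpha E * ?N (X \<union> Y) E + alpha E * ?N (X \<inter> Y) E"
    if "E \<in> L" for E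
  proof -
    have "?N X E + ?N Y E \<le> ?N (X \<union> Y) E + ?N (X \<inter> Y) E"
      using card_induced_rel_Un_Int_le[of R E X Y] assms(3) that by (simp flip: of_nat_add)
    then show ?thesis
      using assms(3) that by (simp flip: distrib_left add: mult_left_mono)
  qed
  then have "(\<Sum>E\<in>L. alpha E * ?N X E) + (\<Sum>E\<in>L. alpha E * ?N Y E)
             \<le> (\<Sum>E\<in>L. alpha E * ?N (X \<union> Y) E) + (\<Sum>E\<in>L. alpha E * ?N (X \<inter> Y) E)"
    by (simp flip: sum.distrib add: sum_mono)
  then show ?thesis
    using vertices unfolding delta_def by (simp flip: of_nat_add)
qed

lemma delta_empty:
  assumes "is_KL_structure L ar A R" and "\<forall>E\<in>L. ar E \<noteq> 0"
  shows "delta L alpha {} (induced_rel R {}) = 0"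
proof -
  have "induced_rel R {} E = {}" if "E \<in> L" for E
    using assms that by (fastforce simp: is_KL_structure_def induced_rel_def)
  then show ?thesis by (simp add: delta_def)
qed

lemma Union_mem_if_Un_closed:
  assumes "finite F" and "{} \<in> F" and "\<And>X Y. X \<in> F \<Longrightarrow> Y \<in> F \<Longrightarrow> X \<union> Y \<in> F"
  shows "\<Union>F \<in> F"
proof -
  have "\<Union>G \<in> F" if "finite G" "G \<subseteq> F" for G
    using that by (induction G rule: finite_induct) (auto intro: assms(2,3))
  then show ?thesis using assms(1) by blast
qed

lemma in_K_alpha_delta_zero_Un:
  assumes "in_K_alpha L ar alpha B R" and "\<forall>E\<in>L. 0 \<le> alpha E"
    and "X \<subseteq> B" "delta L alpha X (induced_rel R X) = 0"
    and "Y \<subseteq> B" "delta L alpha Y (induced_rel R Y) = 0"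
  shows "delta L alpha (X \<union> Y) (induced_rel R (X \<union> Y)) = 0"
proof -
  have finB: "finite B" and rel: "\<forall>E\<in>L. R E \<subseteq> Pow B"
    and nonneg: "\<And>Z. Z \<subseteq> B \<Longrightarrow> delta L alpha Z (induced_rel R Z) \<ge> 0"
    using assms(1) by (auto simp: in_K_alpha_def is_KL_structure_def)
  have "\<forall>E\<in>L. 0 \<le> alpha E \<and> finite (R E)"
    using assms(2) rel finB by (meson finite_Pow_iff rev_finite_subset)
  then have "delta L alpha (X \<union> Y) (induced_rel R (X \<union> Y)) + delta L alpha (X \<inter> Y) (induced_rel R (X \<inter> Y)) \<le> 0"
    using delta_Un_Int_le[of X Y L alpha R] assms(3-6) finB by (simp add: finite_subset)
  moreover have "delta L alpha (X \<inter> Y) (induced_rel R (X \<inter> Y)) \<ge> 0"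
    using nonneg assms(3) by blast
  moreover have "delta L alpha (X \<union> Y) (induced_rel R (X \<union> Y)) \<ge> 0"
    using nonneg assms(3,5) by blast
  ultimately show ?thesis by linarith
qed

theorem proposition3p36:
  fixes L :: "'l set" and ar :: "'l \<Rightarrow> nat" and alpha :: "'l \<Rightarrow> real"
    and B :: "'a set" and R :: "'l \<Rightarrow> 'a set set"
  assumes "finite L"
    and "\<forall>E\<in>L. ar E \<ge> 2"
    and "\<forall>E\<in>L. 0 < alpha E \<and> alpha E \<le> 1"
    and "\<not> (\<forall>E\<in>L. ar E = 2 \<and> alpha E = 1)"
    and "in_K_alpha L ar alpha B R"
  shows "\<exists>Z\<subseteq>B. delta L alpha Z (induced_rel R Z) = 0 \<and>
           (\<forall>C\<subseteq>B. delta L alpha C (induced_rel R C) = 0 \<longrightarrow> C \<subseteq> Z)"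
proof -
  define F where "F = {C. C \<subseteq> B \<and> delta L alpha C (induced_rel R C) = 0}"
  have "finite B" and "is_KL_structure L ar B R"
    using assms(5) by (auto simp: in_K_alpha_def is_KL_structure_def)
  then have "finite F" by (auto simp: F_def intro: finite_subset[of F "Pow B"])
  moreover have "{} \<in> F"
    using delta_empty[OF \<open>is_KL_structure L ar B R\<close>] assms(2) by (force simp: F_def)
  moreover have "X \<union> Y \<in> F" if "X \<in> F" "Y \<in> F" for X Y
    using in_K_alpha_delta_zero_Un[OF assms(5)] assms(3) that by (force simp: F_def)
  ultimately have "\<Union>F \<in> F" by (rule Union_mem_if_Un_closed)
  then show ?thesis by (auto simp: F_def)
qed

end
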